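(* Let $n\ge 2$. For every persistent graph $G=([n],E)$, the set $\Xi(G)$ is a triangulation of the cyclic polytope $C(n+2,3)$.
   Context: The cyclic polytope $C(n+2,3)$ is the convex hull of $n+2$ points on the moment curve $t\mapsto(t,t^2,t^3)$, with vertices labelled $0,\dots,n+1$ in increasing order of the parameter; simplices are identified with their vertex sets. A triangulation is a set of 3-simplices (4-element vertex subsets) whose convex hulls cover the polytope and pairwise intersect in a common (possibly empty) face. A graph $G=([n],E)$ is persistent if (1) $\{i,i+1\}\in E$ for all $1\le i<n$; (2) (X-property) if $\{a,c\},\{b,d\}\in E$ for $a<b<c<d$ then $\{a,d\}\in E$; (3) (bar-property) for every edge $\{a,b\}\in E$ with $a<b-1$ there is $x$ with $a<x<b$ and $\{a,x\},\{x,b\}\in E$. $\hat G$ is the graph on $\{0,\dots,n+1\}$ with edge set $E$ together with all pairs containing $0$ or $n+1$. For $e=\{v,w\}\in E$ with $v<w$, $\ell_G(e)=\max\{i : i<v,\ \{i,w\}\in E(\hat G)\}$, $r_G(e)=\min\{i : w<i,\ \{i,v\}\in E(\hat G)\}$, $\xi_G(e)=\{\ell_G(e),v,w,r_G(e)\}$, and $\Xi(G)=\{\xi_G(e): e\in E\}$. *)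

theory Defs
  imports "HOL-Analysis.Analysis"
begin

definition moment :: "real \<Rightarrow> real^3" where
  "moment x = vector [x, x^2, x^3]"

definition cyc_hull :: "(nat \<Rightarrow> real) \<Rightarrow> nat set \<Rightarrow> (real^3) set" where
  "cyc_hull t S = convex hull ((\<lambda>i. moment (t i)) ` S)"

definition cyc_triangulation :: "(nat \<Rightarrow> real) \<Rightarrow> nat \<Rightarrow> nat set set \<Rightarrow> bool" where
  "cyc_triangulation t m T \<longleftrightarrow>
     (\<forall>\<sigma>\<in>T. \<sigma> \<subseteq> {0..<m} \<and> card \<sigma> = 4) \<and>
     \<Union>((\<lambda>\<sigma>. cyc_hull t \<sigma>) ` T) = cyc_hull t {0..<m} \<and>
     (\<forall>\<sigma>\<in>T. \<forall>\<tau>\<in>T.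
        (cyc_hull t \<sigma> \<inter> cyc_hull t \<tau>) face_of cyc_hull t \<sigma> \<and>
        (cyc_hull t \<sigma> \<inter> cyc_hull t \<tau>) face_of cyc_hull t \<tau>)"

definition persistent :: "nat \<Rightarrow> nat set set \<Rightarrow> bool" where
  "persistent n E \<longleftrightarrow>
     (\<forall>e\<in>E. \<exists>a b. e = {a, b} \<and> a < b \<and> 1 \<le> a \<and> b \<le> n) \<and>
     (\<forall>i. 1 \<le> i \<and> i < n \<longrightarrow> {i, i + 1} \<in> E) \<and>
     (\<forall>a b c d. a < b \<and> b < c \<and> c < d \<and> {a, c} \<in> E \<and> {b, d} \<in> E \<longrightarrow> {a, d} \<in> E) \<and>
     (\<forall>a b. {a, b} \<in> E \<and> a + 1 < b \<longrightarrow>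
        (\<exists>x. a < x \<and> x < b \<and> {a, x} \<in> E \<and> {x, b} \<in> E))"

definition hatE :: "nat \<Rightarrow> nat set set \<Rightarrow> nat set set" where
  "hatE n E = E \<union> {{a, b} | a b. a \<noteq> b \<and> a \<le> n + 1 \<and> b \<le> n + 1 \<and> (a = 0 \<or> a = n + 1)}"

definition ellG :: "nat \<Rightarrow> nat set set \<Rightarrow> nat set \<Rightarrow> nat" where
  "ellG n E e = Max {i. i < Min e \<and> {i, Max e} \<in> hatE n E}"

definition rG :: "nat \<Rightarrow> nat set set \<Rightarrow> nat set \<Rightarrow> nat" where
  "rG n E e = Min {i. Max e < i \<and> {i, Min e} \<in> hatE n E}"

definition xiG :: "nat \<Rightarrow> nat set set \<Rightarrow> nat set \<Rightarrow> nat set" where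
  "xiG n E e = {ellG n E e, Min e, Max e, rG n E e}"

definition XiG :: "nat \<Rightarrow> nat set set \<Rightarrow> nat set set" where
  "XiG n E = xiG n E ` E"

end

theory Submission
  imports Defs
begin

text \<open>Points on the moment curve are in a strong form of general position: every affine
  dependence among them changes sign at least four times along the curve (a discrete Descartes
  rule of signs, proved by induction on the number of vanishing power sums). Hence any four of
  them are affinely independent, any five form a circuit with signs \<open>+ - + - +\<close>, and two
  simplices meet in a common face unless their vertex sets interleave as \<open>x1 < ... < x5\<close> with
  \<open>x1, x3, x5\<close> in one and \<open>x2, x4\<close> in the other.

  For a persistent graph \<open>G\<close> every cell \<open>\<xi>\<^sub>G(e)\<close> is a clique of \<open>\<hat>G\<close> whose gaps
  forbid such an interleaving by an edge of \<open>\<hat>G\<close>, so any two cells meet properly. The cells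
  cover the polytope by induction on the number of edges: if \<open>G\<close> is not the path, some edge
  \<open>b\<close>--\<open>d\<close> can be deleted keeping \<open>G\<close> persistent, and passing from \<open>\<Xi>(G - bd)\<close> to
  \<open>\<Xi>(G)\<close> is a bistellar flip, which preserves the union of the cells; for the path,
  \<open>\<Xi>(G)\<close> is the fan of the simplices \<open>{0, i, i+1, n+1}\<close>.\<close>

section \<open>Sign changes of affine dependences on the moment curve\<close>

lemma moment_nth [simp]: "moment x $ 1 = x" "moment x $ 2 = x^2" "moment x $ 3 = x^3"
  by (simp_all add: moment_def)

lemma inj_on_moment:
  fixes t :: "'a::linorder \<Rightarrow> real"
  assumes "strict_mono_on S t"
  shows "inj_on (\<lambda>i. moment (t i)) S"
  using strict_mono_on_imp_inj_on[OF assms] by (metis (no_types, lifting) inj_on_def moment_nth(1))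

definition sign_alternating :: "nat set \<Rightarrow> (nat \<Rightarrow> real) \<Rightarrow> nat \<Rightarrow> bool" where
  "sign_alternating S c m \<longleftrightarrow>
     (\<exists>xs. length xs = m \<and> set xs \<subseteq> S \<and> successively (\<lambda>i j. i < j \<and> c i * c j < 0) xs)"

lemma sorted_if_successively_less:
  "successively (\<lambda>i j. i < j \<and> P i j) xs \<Longrightarrow> sorted_wrt (<) (xs :: nat list)"
  by (metis (mono_tags, lifting) successively_conv_sorted_wrt successively_mono transp_on_less)

lemma sign_alternating_card:
  assumes "finite S" "sign_alternating S c m"
  shows "m \<le> card S"
proof -
  obtain xs where xs: "length xs = m" "set xs \<subseteq> S" "successively (\<lambda>i j. i < j \<and> c i * c j < 0) xs"
    using assms(2) unfolding sign_alternating_def by blast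
  have "sorted_wrt (<) xs" using xs(3) by (rule sorted_if_successively_less)
  then have "distinct xs" by (simp add: strict_sorted_iff)
  then have "card (set xs) = m" using xs(1) by (simp add: distinct_card)
  then show ?thesis using card_mono[OF assms(1) xs(2)] by simp
qed

lemma sign_alternating_5E:
  assumes "sign_alternating S c 5"
  obtains y0 y1 y2 y3 y4 where "{y0, y1, y2, y3, y4} \<subseteq> S"
    "y0 < y1" "y1 < y2" "y2 < y3" "y3 < y4"
    "c y0 * c y1 < 0" "c y1 * c y2 < 0" "c y2 * c y3 < 0" "c y3 * c y4 < 0"
proof -
  obtain xs where xs: "length xs = 5" "set xs \<subseteq> S" "successively (\<lambda>i j. i < j \<and> c i * c j < 0) xs"
    using assms unfolding sign_alternating_def by blast
  then obtain y0 y1 y2 y3 y4 where "xs = [y0, y1, y2, y3, y4]"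
    by (auto simp: numeral_eq_Suc length_Suc_conv)
  then show ?thesis using that xs by simp
qed

lemma first_sign_change:
  fixes c :: "nat \<Rightarrow> real"
  assumes "finite S" "\<exists>i\<in>S. c i \<noteq> 0" "(\<Sum>i\<in>S. c i) = 0"
  obtains i0 j0 where "i0 \<in> S" "j0 \<in> S" "i0 < j0" "c i0 * c j0 < 0"
    "\<And>i. i \<in> S \<Longrightarrow> i < j0 \<Longrightarrow> 0 \<le> c i0 * c i"
proof -
  define i0 where "i0 = Min {i\<in>S. c i \<noteq> 0}"
  have i0: "i0 \<in> S" "c i0 \<noteq> 0"
    using assms(1,2) Min_in[of "{i\<in>S. c i \<noteq> 0}"] unfolding i0_def by auto
  have before_i0: "c i = 0" if "i \<in> S" "i < i0" for i
    using Min_le[of "{i\<in>S. c i \<noteq> 0}" i] assms(1) that unfolding i0_def by fastforce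
  have "\<exists>j\<in>S. c i0 * c j < 0"
  proof (rule ccontr)
    assume "\<not> ?thesis"
    then have "c i0 * c i0 \<le> (\<Sum>i\<in>S. c i0 * c i)"
      using assms(1) i0(1) by (intro member_le_sum) (auto simp: not_less)
    also have "\<dots> = 0" using assms(3) by (simp add: sum_distrib_left[symmetric])
    finally show False using i0(2) by (auto simp: mult_le_0_iff)
  qed
  define j0 where "j0 = Min {j\<in>S. c i0 * c j < 0}"
  have j0: "j0 \<in> S" "c i0 * c j0 < 0"
    using assms(1) \<open>\<exists>j\<in>S. c i0 * c j < 0\<close> Min_in[of "{j\<in>S. c i0 * c j < 0}"]
    unfolding j0_def by auto
  have before_j0: "0 \<le> c i0 * c i" if "i \<in> S" "i < j0" for i
    using Min_le[of "{j\<in>S. c i0 * c j < 0}" i] assms(1) that unfolding j0_def by fastforce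
  have "i0 < j0"
  proof (rule ccontr)
    assume "\<not> i0 < j0"
    then consider "j0 < i0" | "j0 = i0" by linarith
    then show False
      using before_i0[OF j0(1)] j0(2) by cases (auto simp: mult_less_0_iff)
  qed
  then show ?thesis using that i0(1) j0 before_j0 by blast
qed

lemma successively_sign_mult_pos:
  fixes c p :: "'a \<Rightarrow> real"
  assumes "\<forall>i\<in>set xs. 0 < p i"
  shows "successively (\<lambda>i j. P i j \<and> (c i * p i) * (c j * p j) < 0) xs \<longleftrightarrow>
    successively (\<lambda>i j. P i j \<and> c i * c j < 0) xs"
proof (rule successively_cong)
  fix i j assume "i \<in> set xs" "j \<in> set xs"
  then have "0 < p i * p j" using assms by simp
  moreover have eq: "(c i * p i) * (c j * p j) = (c i * c j) * (p i * p j)" by (simp add: algebra_simps)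
  ultimately show "(P i j \<and> (c i * p i) * (c j * p j) < 0) \<longleftrightarrow> (P i j \<and> c i * c j < 0)"
    unfolding eq using mult_less_cancel_right_pos[of "p i * p j" "c i * c j" 0]
    by (simp only: mult_zero_left)
qed simp

text \<open>Right of \<open>j0\<close> the function \<open>c \<cdot> (t - t j0)\<close> has the signs of \<open>c\<close>, left of \<open>j0\<close> the sign
  opposite to \<open>c i0\<close>; so its alternating chain lies right of \<open>j0\<close> except possibly for its first
  entry, and prepending \<open>i0\<close> and/or \<open>j0\<close> yields one more sign change of \<open>c\<close>.\<close>
lemma sign_alternating_lift:
  fixes c t :: "nat \<Rightarrow> real"
  assumes mono: "strict_mono_on S t"
    and i0: "i0 \<in> S" and j0: "j0 \<in> S" "i0 < j0" "c i0 * c j0 < 0"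
    and before_j0: "\<And>i. i \<in> S \<Longrightarrow> i < j0 \<Longrightarrow> 0 \<le> c i0 * c i"
    and alt: "sign_alternating S (\<lambda>i. c i * (t i - t j0)) (Suc (Suc k))"
  shows "sign_alternating S c (Suc (Suc (Suc k)))"
proof -
  define d where "d i = c i * (t i - t j0)" for i
  obtain x0 x1 xs where chain: "set (x0 # x1 # xs) \<subseteq> S"
      "successively (\<lambda>i j. i < j \<and> d i * d j < 0) (x0 # x1 # xs)" and len: "length xs = k"
    using alt unfolding sign_alternating_def d_def by (auto simp: length_Suc_conv)
  have sorted: "sorted_wrt (<) (x0 # x1 # xs)"
    using chain(2) by (rule sorted_if_successively_less)
  have "c i0 \<noteq> 0" "d j0 = 0" using j0(3) by (auto simp: d_def)
  have d_before: "c i0 * d i \<le> 0" if "i \<in> S" "i < j0" for i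
  proof -
    have "t i < t j0" using mono that j0(1) by (simp add: strict_mono_onD)
    then show ?thesis
      using before_j0[OF that] unfolding d_def by (simp add: mult.assoc[symmetric] mult_nonneg_nonpos)
  qed
  have t_pos: "0 < t i - t j0" if "i \<in> S" "j0 < i" for i
    using mono that j0(1) by (simp add: strict_mono_onD)
  have lift: "successively (\<lambda>i j. i < j \<and> c i * c j < 0) ys"
    if "set ys \<subseteq> S" "\<forall>y\<in>set ys. j0 < y" "successively (\<lambda>i j. i < j \<and> d i * d j < 0) ys" for ys
  proof -
    have "\<forall>i\<in>set ys. 0 < t i - t j0" using that(1,2) t_pos by blast
    from successively_sign_mult_pos[OF this, of "\<lambda>i j. i < j" c] that(3) show ?thesis
      unfolding d_def by simp
  qed
  have same_sign: "0 < c i0 * d i \<longleftrightarrow> 0 < c i0 * c i" if "i \<in> S" "j0 < i" for i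
  proof -
    have eq: "c i0 * d i = (c i0 * c i) * (t i - t j0)" by (simp add: d_def mult.assoc)
    show ?thesis
      unfolding eq using mult_less_cancel_right_pos[OF t_pos[OF that], of 0 "c i0 * c i"]
      by (simp only: mult_zero_left)
  qed
  have "x0 \<noteq> j0" using chain(2) \<open>d j0 = 0\<close> by auto
  then consider "j0 < x0" | "x0 < j0" by linarith
  then show ?thesis
  proof cases
    case 1
    then have "\<forall>y\<in>set (x0 # x1 # xs). j0 < y" using sorted by auto
    then have tail: "successively (\<lambda>i j. i < j \<and> c i * c j < 0) (x0 # x1 # xs)"
      using lift chain by blast
    show ?thesis
    proof (cases "c i0 * c x0 < 0")
      case True
      then show ?thesis
        unfolding sign_alternating_def using i0 j0 1 chain(1) tail len
        by (intro exI[of _ "i0 # x0 # x1 # xs"]) auto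
    next
      case False
      have "c x0 \<noteq> 0" using chain(2) unfolding d_def by auto
      then have "c i0 * c x0 \<noteq> 0" using \<open>c i0 \<noteq> 0\<close> by simp
      then have "0 < c i0 * c x0" using False by linarith
      then have "c j0 * c x0 < 0" using j0(3) by (auto simp: mult_less_0_iff zero_less_mult_iff)
      then show ?thesis
        unfolding sign_alternating_def using j0 1 chain(1) tail len
        by (intro exI[of _ "j0 # x0 # x1 # xs"]) auto
    qed
  next
    case 2
    have "d x0 \<noteq> 0" using chain(2) by auto
    then have "c i0 * d x0 < 0"
      using d_before[of x0] chain(1) 2 \<open>c i0 \<noteq> 0\<close> by (auto simp: order.order_iff_strict)
    then have "0 < c i0 * d x1" using chain(2) by (auto simp: mult_less_0_iff zero_less_mult_iff)
    then have "j0 < x1"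
      using d_before[of x1] chain(1) \<open>d j0 = 0\<close> by (cases x1 j0 rule: linorder_cases) auto
    then have "\<forall>y\<in>set (x1 # xs). j0 < y" using sorted by auto
    then have tail: "successively (\<lambda>i j. i < j \<and> c i * c j < 0) (x1 # xs)"
      using lift chain by auto
    have "0 < c i0 * c x1" using same_sign[of x1] \<open>0 < c i0 * d x1\<close> \<open>j0 < x1\<close> chain(1) by auto
    then have "c j0 * c x1 < 0" using j0(3) by (auto simp: mult_less_0_iff zero_less_mult_iff)
    then show ?thesis
      unfolding sign_alternating_def using i0 j0 \<open>j0 < x1\<close> chain(1) tail len
      by (intro exI[of _ "i0 # j0 # x1 # xs"]) auto
  qed
qed

lemma sign_alternating_if_power_sums_vanish:
  fixes c t :: "nat \<Rightarrow> real"
  assumes "finite S" "strict_mono_on S t" "\<exists>i\<in>S. c i \<noteq> 0"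
    and "\<forall>j\<le>k. (\<Sum>i\<in>S. c i * t i ^ j) = 0"
  shows "sign_alternating S c (k + 2)"
  using assms(3,4)
proof (induction k arbitrary: c)
  case 0
  have "(\<Sum>i\<in>S. c i) = 0" using 0(2) by simp
  then obtain i0 j0 where "i0 \<in> S" "j0 \<in> S" "i0 < j0" "c i0 * c j0 < 0"
    using first_sign_change[OF assms(1) 0(1)] by blast
  then show ?case unfolding sign_alternating_def by (intro exI[of _ "[i0, j0]"]) auto
next
  case (Suc k)
  have "(\<Sum>i\<in>S. c i) = 0" using Suc.prems(2) by auto
  then obtain i0 j0 where i0j0: "i0 \<in> S" "j0 \<in> S" "i0 < j0" "c i0 * c j0 < 0"
    and before_j0: "\<And>i. i \<in> S \<Longrightarrow> i < j0 \<Longrightarrow> 0 \<le> c i0 * c i"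
    using first_sign_change[OF assms(1) Suc.prems(1)] by blast
  define d where "d i = c i * (t i - t j0)" for i
  have "t i0 < t j0" using assms(2) i0j0 by (simp add: strict_mono_onD)
  then have "\<exists>i\<in>S. d i \<noteq> 0" using i0j0 unfolding d_def by (intro bexI[of _ i0]) auto
  moreover have "\<forall>j\<le>k. (\<Sum>i\<in>S. d i * t i ^ j) = 0"
  proof (intro allI impI)
    fix j assume "j \<le> k"
    have "(\<Sum>i\<in>S. d i * t i ^ j) = (\<Sum>i\<in>S. c i * t i ^ Suc j - t j0 * (c i * t i ^ j))"
      unfolding d_def by (rule sum.cong) (auto simp: algebra_simps)
    also have "\<dots> = (\<Sum>i\<in>S. c i * t i ^ Suc j) - t j0 * (\<Sum>i\<in>S. c i * t i ^ j)"
      by (simp add: sum_subtractf sum_distrib_left)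
    also have "\<dots> = 0" using Suc.prems(2) \<open>j \<le> k\<close> by (simp del: power_Suc)
    finally show "(\<Sum>i\<in>S. d i * t i ^ j) = 0" .
  qed
  ultimately have "sign_alternating S d (Suc (Suc k))" using Suc.IH by simp
  then show ?case using sign_alternating_lift[OF assms(2) i0j0 before_j0] unfolding d_def by simp
qed

lemma power_sums_vanish_if_moment_sum_0:
  assumes "(\<Sum>i\<in>S. c i) = 0" "(\<Sum>i\<in>S. c i *\<^sub>R moment (t i)) = 0"
  shows "\<forall>j\<le>3. (\<Sum>i\<in>S. c i * t i ^ j) = 0"
proof -
  have "(\<Sum>i\<in>S. c i * t i) = 0" using arg_cong[OF assms(2), of "\<lambda>v. v $ 1"] by simp
  moreover have "(\<Sum>i\<in>S. c i * t i ^ 2) = 0" using arg_cong[OF assms(2), of "\<lambda>v. v $ 2"] by simp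
  moreover have "(\<Sum>i\<in>S. c i * t i ^ 3) = 0" using arg_cong[OF assms(2), of "\<lambda>v. v $ 3"] by simp
  ultimately show ?thesis using assms(1) by (auto simp: le_Suc_eq numeral_eq_Suc)
qed

lemma moment_dependence_sign_alternating:
  assumes "finite S" "strict_mono_on S t" "\<exists>i\<in>S. c i \<noteq> 0"
    and "(\<Sum>i\<in>S. c i) = 0" "(\<Sum>i\<in>S. c i *\<^sub>R moment (t i)) = 0"
  shows "sign_alternating S c 5"
  using sign_alternating_if_power_sums_vanish[OF assms(1-3) power_sums_vanish_if_moment_sum_0[OF assms(4,5)]]
  by simp

lemma moment_affine_dependence:
  fixes t :: "'a::linorder \<Rightarrow> real"
  assumes "finite S" "strict_mono_on S t" "affine_dependent ((\<lambda>i. moment (t i)) ` S)"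
  obtains c where "\<exists>i\<in>S. c i \<noteq> 0" "(\<Sum>i\<in>S. c i) = 0" "(\<Sum>i\<in>S. c i *\<^sub>R moment (t i)) = 0"
proof -
  have inj: "inj_on (\<lambda>i. moment (t i)) S" using assms(2) by (rule inj_on_moment)
  obtain U where U: "sum U ((\<lambda>i. moment (t i)) ` S) = 0" "\<exists>v\<in>(\<lambda>i. moment (t i)) ` S. U v \<noteq> 0"
      "(\<Sum>v\<in>(\<lambda>i. moment (t i)) ` S. U v *\<^sub>R v) = 0"
    using assms(3) unfolding affine_dependent_explicit_finite[OF finite_imageI[OF assms(1)]] by blast
  show ?thesis
  proof (rule that[of "\<lambda>i. U (moment (t i))"])
    show "\<exists>i\<in>S. U (moment (t i)) \<noteq> 0" using U(2) by auto
    show "(\<Sum>i\<in>S. U (moment (t i))) = 0" using U(1) sum.reindex[OF inj, of U] by (simp add: o_def)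
    show "(\<Sum>i\<in>S. U (moment (t i)) *\<^sub>R moment (t i)) = 0"
      using U(3) sum.reindex[OF inj, of "\<lambda>v. U v *\<^sub>R v"] by (simp add: o_def)
  qed
qed

lemma moment_affine_independent:
  fixes S :: "nat set"
  assumes "finite S" "strict_mono_on S t" "card S \<le> 4"
  shows "\<not> affine_dependent ((\<lambda>i. moment (t i)) ` S)"
proof
  assume "affine_dependent ((\<lambda>i. moment (t i)) ` S)"
  then obtain c where "\<exists>i\<in>S. c i \<noteq> 0" "(\<Sum>i\<in>S. c i) = 0" "(\<Sum>i\<in>S. c i *\<^sub>R moment (t i)) = 0"
    using moment_affine_dependence[OF assms(1,2)] by blast
  then have "sign_alternating S c 5" by (rule moment_dependence_sign_alternating[OF assms(1,2)])
  then have "5 \<le> card S" by (rule sign_alternating_card[OF assms(1)])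
  then show False using assms(3) by simp
qed

lemma moment_circuit:
  fixes a b c d e :: nat
  assumes "a < b" "b < c" "c < d" "d < e" "strict_mono_on {a,b,c,d,e} t"
  obtains w where "0 < w a" "w b < 0" "0 < w c" "w d < 0" "0 < w e"
    "(\<Sum>i\<in>{a,b,c,d,e}. w i) = 0" "(\<Sum>i\<in>{a,b,c,d,e}. w i *\<^sub>R moment (t i)) = 0"
proof -
  let ?F = "{a,b,c,d,e}"
  have "card ((\<lambda>i. moment (t i)) ` ?F) = 5"
    using card_image[OF inj_on_moment[OF assms(5)]] assms(1-4) by simp
  then have "affine_dependent ((\<lambda>i. moment (t i)) ` ?F)"
    by (intro affine_dependent_biggerset) auto
  then obtain u where u: "\<exists>i\<in>?F. u i \<noteq> 0" "(\<Sum>i\<in>?F. u i) = 0" "(\<Sum>i\<in>?F. u i *\<^sub>R moment (t i)) = 0"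
    using moment_affine_dependence[OF _ assms(5)] by blast
  have "sign_alternating ?F u 5" using moment_dependence_sign_alternating[OF _ assms(5) u] by simp
  then obtain y0 y1 y2 y3 y4 where y: "{y0, y1, y2, y3, y4} \<subseteq> ?F"
      "y0 < y1" "y1 < y2" "y2 < y3" "y3 < y4"
      and signs: "u y0 * u y1 < 0" "u y1 * u y2 < 0" "u y2 * u y3 < 0" "u y3 * u y4 < 0"
    by (rule sign_alternating_5E)
  have "{y0, y1, y2, y3, y4} = ?F"
    using y assms(1-4) by (intro card_subset_eq) auto
  then have "[y0, y1, y2, y3, y4] = [a, b, c, d, e]"
    using y assms(1-4) by (intro strict_sorted_equal) auto
  then have signs': "u a * u b < 0" "u b * u c < 0" "u c * u d < 0" "u d * u e < 0"
    using signs by simp_all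
  show ?thesis
  proof (cases "0 < u a")
    case True
    then show ?thesis using that[of u] signs' u by (auto simp: mult_less_0_iff)
  next
    case False
    then have "u a < 0" using signs' by (auto simp: mult_less_0_iff)
    then show ?thesis using that[of "\<lambda>i. - u i"] signs' u by (auto simp: mult_less_0_iff sum_negf)
  qed
qed

section \<open>Convex hulls of points on the moment curve\<close>

lemma cyc_hull_mono: "A \<subseteq> B \<Longrightarrow> cyc_hull t A \<subseteq> cyc_hull t B"
  unfolding cyc_hull_def by (intro hull_mono image_mono)

lemma mem_cyc_hull_iff_weights:
  assumes "finite S" "\<sigma> \<subseteq> S" "strict_mono_on S t"
  shows "x \<in> cyc_hull t \<sigma> \<longleftrightarrow> (\<exists>l. (\<forall>i\<in>S. 0 \<le> l i) \<and> (\<forall>i\<in>S - \<sigma>. l i = 0) \<and> sum l S = 1 \<and>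
           (\<Sum>i\<in>S. l i *\<^sub>R moment (t i)) = x)"
proof
  have fin: "finite \<sigma>" using assms(1,2) by (rule finite_subset[rotated])
  have restrict: "sum l S = sum l \<sigma>" "(\<Sum>i\<in>S. l i *\<^sub>R moment (t i)) = (\<Sum>i\<in>\<sigma>. l i *\<^sub>R moment (t i))"
    if "\<forall>i\<in>S - \<sigma>. l i = 0" for l
    using that by (auto intro!: sum.mono_neutral_right[OF assms(1,2)])
  {
    assume "x \<in> cyc_hull t \<sigma>"
    then obtain u where u: "\<forall>y\<in>(\<lambda>i. moment (t i)) ` \<sigma>. 0 \<le> u y" "sum u ((\<lambda>i. moment (t i)) ` \<sigma>) = 1"
        "(\<Sum>y\<in>(\<lambda>i. moment (t i)) ` \<sigma>. u y *\<^sub>R y) = x"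
      unfolding cyc_hull_def convex_hull_finite[OF finite_imageI[OF fin]] by blast
    have inj: "inj_on (\<lambda>i. moment (t i)) \<sigma>"
      using inj_on_moment[OF monotone_on_subset[OF assms(3,2)]] .
    define l where "l i = (if i \<in> \<sigma> then u (moment (t i)) else 0)" for i
    have "sum l \<sigma> = 1" "(\<Sum>i\<in>\<sigma>. l i *\<^sub>R moment (t i)) = x"
      using u(2,3) sum.reindex[OF inj, of u] sum.reindex[OF inj, of "\<lambda>v. u v *\<^sub>R v"]
      by (simp_all add: l_def o_def)
    then show "\<exists>l. (\<forall>i\<in>S. 0 \<le> l i) \<and> (\<forall>i\<in>S - \<sigma>. l i = 0) \<and> sum l S = 1 \<and>
           (\<Sum>i\<in>S. l i *\<^sub>R moment (t i)) = x"
      using restrict[of l] u(1) by (intro exI[of _ l]) (auto simp: l_def)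
  next
    assume "\<exists>l. (\<forall>i\<in>S. 0 \<le> l i) \<and> (\<forall>i\<in>S - \<sigma>. l i = 0) \<and> sum l S = 1 \<and>
           (\<Sum>i\<in>S. l i *\<^sub>R moment (t i)) = x"
    then obtain l where l: "\<forall>i\<in>S. 0 \<le> l i" "\<forall>i\<in>S - \<sigma>. l i = 0" "sum l S = 1"
        "(\<Sum>i\<in>S. l i *\<^sub>R moment (t i)) = x"
      by blast
    have "(\<Sum>i\<in>\<sigma>. l i *\<^sub>R moment (t i)) \<in> convex hull ((\<lambda>i. moment (t i)) ` \<sigma>)"
      by (rule convex_sum[OF fin convex_convex_hull])
        (use l restrict[of l] assms(2) in \<open>auto intro: hull_inc\<close>)
    then show "x \<in> cyc_hull t \<sigma>" using l restrict[of l] unfolding cyc_hull_def by simp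
  }
qed

text \<open>A Caratheodory-type step: move along the dependence \<open>w\<close> until a first coefficient
  reaches zero.\<close>
lemma nonneg_combination_eliminate:
  fixes v :: "'i \<Rightarrow> 'a::real_vector" and l w :: "'i \<Rightarrow> real"
  assumes "finite S" "\<forall>i\<in>S. 0 \<le> l i" "\<exists>j\<in>S. 0 < w j"
    and "(\<Sum>i\<in>S. w i) = 0" "(\<Sum>i\<in>S. w i *\<^sub>R v i) = 0"
  obtains l' j where "\<forall>i\<in>S. 0 \<le> l' i" "sum l' S = sum l S"
    "(\<Sum>i\<in>S. l' i *\<^sub>R v i) = (\<Sum>i\<in>S. l i *\<^sub>R v i)" "j \<in> S" "0 < w j" "l' j = 0"
proof -
  define R where "R = (\<lambda>j. l j / w j) ` {j\<in>S. 0 < w j}"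
  have R: "finite R" "R \<noteq> {}" unfolding R_def using assms(1,3) by auto
  define \<theta> where "\<theta> = Min R"
  obtain j where j: "j \<in> S" "0 < w j" "\<theta> = l j / w j"
    using Min_in[OF R] unfolding \<theta>_def R_def by auto
  have \<theta>_le: "\<theta> \<le> l i / w i" if "i \<in> S" "0 < w i" for i
    using Min_le[OF R(1)] that unfolding \<theta>_def R_def by auto
  have "0 \<le> \<theta>" using j assms(2) by simp
  define l' where "l' i = l i - \<theta> * w i" for i
  show ?thesis
  proof (rule that[of l' j])
    show "\<forall>i\<in>S. 0 \<le> l' i"
    proof
      fix i assume i: "i \<in> S"
      show "0 \<le> l' i"
      proof (cases "0 < w i")
        case True
        then show ?thesis using \<theta>_le[OF i True] by (simp add: l'_def pos_le_divide_eq)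
      next
        case False
        then have "\<theta> * w i \<le> 0" using \<open>0 \<le> \<theta>\<close> by (simp add: mult_nonneg_nonpos)
        moreover have "0 \<le> l i" using assms(2) i by blast
        ultimately show ?thesis by (simp add: l'_def)
      qed
    qed
    show "sum l' S = sum l S"
      using assms(4) by (simp add: l'_def sum_subtractf sum_distrib_left[symmetric])
    have "(\<Sum>i\<in>S. l' i *\<^sub>R v i) = (\<Sum>i\<in>S. l i *\<^sub>R v i) - \<theta> *\<^sub>R (\<Sum>i\<in>S. w i *\<^sub>R v i)"
      by (simp add: l'_def scaleR_left_diff_distrib sum_subtractf scaleR_sum_right)
    then show "(\<Sum>i\<in>S. l' i *\<^sub>R v i) = (\<Sum>i\<in>S. l i *\<^sub>R v i)" using assms(5) by simp
    show "l' j = 0" using j by (simp add: l'_def)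
  qed (use j in auto)
qed

lemma cyc_hull_subset_UN_delete:
  assumes "finite S" "strict_mono_on S t" "\<exists>j\<in>S. 0 < w j"
    and "(\<Sum>i\<in>S. w i) = 0" "(\<Sum>i\<in>S. w i *\<^sub>R moment (t i)) = 0"
  shows "cyc_hull t S \<subseteq> (\<Union>j\<in>{j\<in>S. 0 < w j}. cyc_hull t (S - {j}))"
proof
  fix x assume "x \<in> cyc_hull t S"
  then obtain l where l: "\<forall>i\<in>S. 0 \<le> l i" "sum l S = 1" "(\<Sum>i\<in>S. l i *\<^sub>R moment (t i)) = x"
    using mem_cyc_hull_iff_weights[OF assms(1) order_refl assms(2)] by auto
  obtain l' j where l': "\<forall>i\<in>S. 0 \<le> l' i" "sum l' S = sum l S"
      "(\<Sum>i\<in>S. l' i *\<^sub>R moment (t i)) = (\<Sum>i\<in>S. l i *\<^sub>R moment (t i))" "j \<in> S" "0 < w j" "l' j = 0"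
    using nonneg_combination_eliminate[OF assms(1) l(1) assms(3-5)] .
  have "x \<in> cyc_hull t (S - {j})"
    unfolding mem_cyc_hull_iff_weights[OF assms(1) Diff_subset assms(2)]
    using l l' by (intro exI[of _ l']) auto
  then show "x \<in> (\<Union>j\<in>{j\<in>S. 0 < w j}. cyc_hull t (S - {j}))" using l'(4,5) by blast
qed

text \<open>Deleting the odd-position, resp. even-position, points of a five-point circuit gives the two
  triangulations of its hull; the same splitting applies to any hull containing the circuit.\<close>
lemma cyc_hull_circuit_split:
  assumes "finite S" "strict_mono_on S t" "{a,b,c,d,e} \<subseteq> S"
    and "a < b" "b < c" "c < d" "d < e"
  shows "cyc_hull t S \<subseteq> cyc_hull t (S - {a}) \<union> cyc_hull t (S - {c}) \<union> cyc_hull t (S - {e})"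
    and "cyc_hull t S \<subseteq> cyc_hull t (S - {b}) \<union> cyc_hull t (S - {d})"
proof -
  let ?F = "{a,b,c,d,e}"
  obtain w where w: "0 < w a" "w b < 0" "0 < w c" "w d < 0" "0 < w e"
      "(\<Sum>i\<in>?F. w i) = 0" "(\<Sum>i\<in>?F. w i *\<^sub>R moment (t i)) = 0"
    using moment_circuit[OF assms(4-7) monotone_on_subset[OF assms(2,3)]] by blast
  define w' where "w' i = (if i \<in> ?F then w i else 0)" for i
  have "(\<Sum>i\<in>S. w' i) = (\<Sum>i\<in>?F. w i)" "(\<Sum>i\<in>S. w' i *\<^sub>R moment (t i)) = (\<Sum>i\<in>?F. w i *\<^sub>R moment (t i))"
    by (intro sum.mono_neutral_cong_right[OF assms(1,3)]; simp add: w'_def)+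
  then have sums: "(\<Sum>i\<in>S. w' i) = 0" "(\<Sum>i\<in>S. w' i *\<^sub>R moment (t i)) = 0"
    "(\<Sum>i\<in>S. - w' i) = 0" "(\<Sum>i\<in>S. - w' i *\<^sub>R moment (t i)) = 0"
    using w(6,7) by (simp_all add: sum_negf)
  have "{j\<in>S. 0 < w' j} = {a, c, e}" "{j\<in>S. 0 < - w' j} = {b, d}"
    using w assms(3-7) by (auto simp: w'_def)
  then show "cyc_hull t S \<subseteq> cyc_hull t (S - {a}) \<union> cyc_hull t (S - {c}) \<union> cyc_hull t (S - {e})"
    and "cyc_hull t S \<subseteq> cyc_hull t (S - {b}) \<union> cyc_hull t (S - {d})"
    using cyc_hull_subset_UN_delete[OF assms(1,2) _ sums(1,2)]
      cyc_hull_subset_UN_delete[OF assms(1,2) _ sums(3,4)] assms(3) by auto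
qed

lemma cyc_hull_fan:
  assumes "2 \<le> n" "strict_mono_on {0..n+1} t"
  shows "cyc_hull t {0..<n+2} \<subseteq> (\<Union>i\<in>{1..n-1}. cyc_hull t {0, i, i+1, n+1})"
proof -
  define U where "U lo hi = (\<Union>i\<in>{lo..<hi}. cyc_hull t {0, i, i+1, n+1})" for lo hi
  have "cyc_hull t ({0, n+1} \<union> {lo..hi}) \<subseteq> U lo hi"
    if "1 \<le> lo" "lo < hi" "hi \<le> n" for lo hi
    using that
  proof (induction "hi - lo" arbitrary: lo hi rule: less_induct)
    case less
    show ?case
    proof (cases "hi = lo + 1")
      case True
      have "{0, n+1} \<union> {lo..hi} = {0, lo, lo+1, n+1}" "U lo hi = cyc_hull t {0, lo, lo+1, n+1}"
        unfolding U_def using True by auto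
      then show ?thesis by simp
    next
      case False
      let ?S = "{0, n+1} \<union> {lo..hi}"
      have "?S \<subseteq> {0..n+1}" using less.prems by auto
      then have mono: "strict_mono_on ?S t" by (rule monotone_on_subset[OF assms(2)])
      have five: "{0, lo, lo+1, hi, n+1} \<subseteq> ?S" using less.prems by auto
      have "finite ?S" by simp
      have "0 < lo" "lo < lo + 1" "lo + 1 < hi" "hi < n + 1" using less.prems False by auto
      then have "cyc_hull t ?S \<subseteq> cyc_hull t (?S - {lo}) \<union> cyc_hull t (?S - {hi})"
        by (rule cyc_hull_circuit_split(2)[OF \<open>finite ?S\<close> mono five])
      moreover have "?S - {lo} = {0, n+1} \<union> {lo+1..hi}" "?S - {hi} = {0, n+1} \<union> {lo..hi-1}"
        using less.prems by auto
      ultimately have "cyc_hull t ?S \<subseteq>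
          cyc_hull t ({0, n+1} \<union> {lo+1..hi}) \<union> cyc_hull t ({0, n+1} \<union> {lo..hi-1})"
        by simp
      also have "\<dots> \<subseteq> U (lo+1) hi \<union> U lo (hi-1)"
        using less.prems False by (intro Un_mono less.hyps) auto
      also have "\<dots> \<subseteq> U lo hi"
        unfolding U_def by (intro Un_least UN_mono) auto
      finally show ?thesis .
    qed
  qed
  from this[of 1 n] have "cyc_hull t ({0, n+1} \<union> {1..n}) \<subseteq> U 1 n" using assms(1) by simp
  moreover have "{0, n+1} \<union> {1..n} = {0..<n+2}" "{1..<n} = {1..n-1}" by auto
  ultimately show ?thesis unfolding U_def by simp
qed

definition interleaves :: "nat set \<Rightarrow> nat set \<Rightarrow> bool" where
  "interleaves \<sigma> \<tau> \<longleftrightarrow> (\<exists>x1 x2 x3 x4 x5. x1 < x2 \<and> x2 < x3 \<and> x3 < x4 \<and> x4 < x5 \<and>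
     x1 \<in> \<sigma> \<and> x3 \<in> \<sigma> \<and> x5 \<in> \<sigma> \<and> x2 \<in> \<tau> \<and> x4 \<in> \<tau>)"

lemma moment_weights_eq_if_not_interleaves:
  assumes "finite S" "strict_mono_on S t" "\<not> interleaves \<sigma> \<tau>" "\<not> interleaves \<tau> \<sigma>"
    and l: "\<forall>i\<in>S. 0 \<le> l i" "\<forall>i\<in>S - \<sigma>. l i = 0" and m: "\<forall>i\<in>S. 0 \<le> m i" "\<forall>i\<in>S - \<tau>. m i = 0"
    and sums: "sum l S = sum m S" "(\<Sum>i\<in>S. l i *\<^sub>R moment (t i)) = (\<Sum>i\<in>S. m i *\<^sub>R moment (t i))"
  shows "\<forall>i\<in>S. l i = m i"
proof (rule ccontr)
  define c where "c i = l i - m i" for i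
  assume "\<not> (\<forall>i\<in>S. l i = m i)"
  then have "\<exists>i\<in>S. c i \<noteq> 0" unfolding c_def by auto
  moreover have "(\<Sum>i\<in>S. c i) = 0" "(\<Sum>i\<in>S. c i *\<^sub>R moment (t i)) = 0"
    using sums by (simp_all add: c_def sum_subtractf scaleR_left_diff_distrib)
  ultimately have "sign_alternating S c 5"
    using moment_dependence_sign_alternating[OF assms(1,2)] by blast
  then obtain y0 y1 y2 y3 y4 where y: "{y0, y1, y2, y3, y4} \<subseteq> S"
      "y0 < y1" "y1 < y2" "y2 < y3" "y3 < y4"
      and signs: "c y0 * c y1 < 0" "c y1 * c y2 < 0" "c y2 * c y3 < 0" "c y3 * c y4 < 0"
    by (rule sign_alternating_5E)
  have pos: "i \<in> \<sigma>" if "i \<in> S" "0 < c i" for i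
  proof (rule ccontr)
    assume "i \<notin> \<sigma>"
    then have "l i = 0" "0 \<le> m i" using that(1) l(2) m(1) by auto
    then show False using that(2) unfolding c_def by simp
  qed
  have neg: "i \<in> \<tau>" if "i \<in> S" "c i < 0" for i
  proof (rule ccontr)
    assume "i \<notin> \<tau>"
    then have "m i = 0" "0 \<le> l i" using that(1) l(1) m(2) by auto
    then show False using that(2) unfolding c_def by simp
  qed
  have in_S: "y0 \<in> S" "y1 \<in> S" "y2 \<in> S" "y3 \<in> S" "y4 \<in> S" using y(1) by auto
  have "c y0 \<noteq> 0" using signs(1) by auto
  then consider "0 < c y0" | "c y0 < 0" by linarith
  then show False
  proof cases
    case 1
    then have "c y1 < 0" "0 < c y2" "c y3 < 0" "0 < c y4"
      using signs by (auto simp: mult_less_0_iff)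
    then have "y0 \<in> \<sigma>" "y2 \<in> \<sigma>" "y4 \<in> \<sigma>" "y1 \<in> \<tau>" "y3 \<in> \<tau>"
      using 1 pos[OF in_S(1)] pos[OF in_S(3)] pos[OF in_S(5)] neg[OF in_S(2)] neg[OF in_S(4)]
      by simp_all
    then have "interleaves \<sigma> \<tau>" unfolding interleaves_def using y(2-5) by blast
    then show False using assms(3) by blast
  next
    case 2
    then have "0 < c y1" "c y2 < 0" "0 < c y3" "c y4 < 0"
      using signs by (auto simp: mult_less_0_iff)
    then have "y0 \<in> \<tau>" "y2 \<in> \<tau>" "y4 \<in> \<tau>" "y1 \<in> \<sigma>" "y3 \<in> \<sigma>"
      using 2 neg[OF in_S(1)] neg[OF in_S(3)] neg[OF in_S(5)] pos[OF in_S(2)] pos[OF in_S(4)]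
      by simp_all
    then have "interleaves \<tau> \<sigma>" unfolding interleaves_def using y(2-5) by blast
    then show False using assms(4) by blast
  qed
qed

lemma cyc_hull_Int:
  assumes "finite (\<sigma> \<union> \<tau>)" "strict_mono_on (\<sigma> \<union> \<tau>) t"
    and "\<not> interleaves \<sigma> \<tau>" "\<not> interleaves \<tau> \<sigma>"
  shows "cyc_hull t \<sigma> \<inter> cyc_hull t \<tau> = cyc_hull t (\<sigma> \<inter> \<tau>)"
proof
  show "cyc_hull t (\<sigma> \<inter> \<tau>) \<subseteq> cyc_hull t \<sigma> \<inter> cyc_hull t \<tau>" by (simp add: cyc_hull_mono)
  let ?S = "\<sigma> \<union> \<tau>"
  note weights = mem_cyc_hull_iff_weights[OF assms(1) _ assms(2)]
  show "cyc_hull t \<sigma> \<inter> cyc_hull t \<tau> \<subseteq> cyc_hull t (\<sigma> \<inter> \<tau>)"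
  proof
    fix x assume x: "x \<in> cyc_hull t \<sigma> \<inter> cyc_hull t \<tau>"
    obtain l where
      l: "\<forall>i\<in>?S. 0 \<le> l i" "\<forall>i\<in>?S - \<sigma>. l i = 0" "sum l ?S = 1" "(\<Sum>i\<in>?S. l i *\<^sub>R moment (t i)) = x"
      using iffD1[OF weights[OF Un_upper1]] x by blast
    obtain m where
      m: "\<forall>i\<in>?S. 0 \<le> m i" "\<forall>i\<in>?S - \<tau>. m i = 0" "sum m ?S = 1" "(\<Sum>i\<in>?S. m i *\<^sub>R moment (t i)) = x"
      using iffD1[OF weights[OF Un_upper2]] x by blast
    have eq: "\<forall>i\<in>?S. l i = m i"
      using l m by (intro moment_weights_eq_if_not_interleaves[OF assms l(1,2) m(1,2)]) simp_all
    have zero: "l i = 0" if "i \<in> ?S - \<sigma> \<inter> \<tau>" for i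
    proof (cases "i \<in> \<sigma>")
      case True
      then show ?thesis using that eq m(2) by auto
    qed (use that l(2) in auto)
    have sub: "\<sigma> \<inter> \<tau> \<subseteq> ?S" by blast
    show "x \<in> cyc_hull t (\<sigma> \<inter> \<tau>)"
      unfolding weights[OF sub] using l(1,3,4) zero by blast
  qed
qed

lemma cyc_hull_Int_face_of:
  assumes "finite \<sigma>" "strict_mono_on \<sigma> t" "card \<sigma> \<le> 4"
  shows "cyc_hull t (\<sigma> \<inter> \<tau>) face_of cyc_hull t \<sigma>"
  unfolding cyc_hull_def face_of_convex_hull_affine_independent[OF moment_affine_independent[OF assms]]
  by (intro exI[of _ "(\<lambda>i. moment (t i)) ` (\<sigma> \<inter> \<tau>)"]) auto


section \<open>Persistent graphs and their cells\<close>

definition hat_adj :: "nat \<Rightarrow> nat set set \<Rightarrow> nat \<Rightarrow> nat \<Rightarrow> bool" where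
  "hat_adj n E x y \<longleftrightarrow> {x, y} \<in> hatE n E"

lemma hat_adj_iff:
  "hat_adj n E x y \<longleftrightarrow>
     {x, y} \<in> E \<or> (x \<noteq> y \<and> x \<le> n + 1 \<and> y \<le> n + 1 \<and> (x = 0 \<or> x = n + 1 \<or> y = 0 \<or> y = n + 1))"
  unfolding hat_adj_def hatE_def by (auto simp: doubleton_eq_iff)

lemma hat_adj_sym: "hat_adj n E x y \<longleftrightarrow> hat_adj n E y x"
  unfolding hat_adj_def by (simp add: insert_commute)

lemma hat_adj_if_edge: "{x, y} \<in> E \<Longrightarrow> hat_adj n E x y"
  unfolding hat_adj_iff by simp

lemma hat_adj_0: "0 < y \<Longrightarrow> y \<le> n + 1 \<Longrightarrow> hat_adj n E 0 y"
  unfolding hat_adj_iff by simp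

lemma hat_adj_top: "x \<le> n \<Longrightarrow> hat_adj n E x (n + 1)"
  unfolding hat_adj_iff by simp

text \<open>\<open>xi_cell n E a b c d\<close> says that \<open>{a,b,c,d} = \<xi>\<^sub>G({b,c})\<close>: \<open>a\<close> and \<open>d\<close> are the
  nearest neighbours of \<open>c\<close> below \<open>b\<close> and of \<open>b\<close> above \<open>c\<close> in \<open>\<hat>G\<close>. The remaining
  adjacencies of the clique are included since they hold in persistent graphs.\<close>
definition xi_cell :: "nat \<Rightarrow> nat set set \<Rightarrow> nat \<Rightarrow> nat \<Rightarrow> nat \<Rightarrow> nat \<Rightarrow> bool" where
  "xi_cell n E a b c d \<longleftrightarrow> a < b \<and> b < c \<and> c < d \<and> {b, c} \<in> E \<and>
     hat_adj n E a b \<and> hat_adj n E a c \<and> hat_adj n E a d \<and> hat_adj n E b d \<and> hat_adj n E c d \<and>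
     (\<forall>x. a < x \<and> x < b \<longrightarrow> \<not> hat_adj n E x c) \<and> (\<forall>x. c < x \<and> x < d \<longrightarrow> \<not> hat_adj n E x b)"

definition X_forced :: "nat set set \<Rightarrow> nat \<Rightarrow> nat \<Rightarrow> bool" where
  "X_forced E a d \<longleftrightarrow> (\<exists>b c. a < b \<and> b < c \<and> c < d \<and> {a, c} \<in> E \<and> {b, d} \<in> E)"

locale persistent_graph =
  fixes n :: nat and E :: "nat set set"
  assumes persistent: "persistent n E"
begin

lemma edge_shape: "\<forall>e\<in>E. \<exists>a b. e = {a, b} \<and> a < b \<and> 1 \<le> a \<and> b \<le> n"
  using persistent unfolding persistent_def by (elim conjE)

lemma edge_bounds:
  assumes "{x, y} \<in> E"
  shows "x \<noteq> y \<and> 1 \<le> x \<and> x \<le> n \<and> 1 \<le> y \<and> y \<le> n"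
proof -
  obtain a b where "{x, y} = {a, b}" "a < b" "1 \<le> a" "b \<le> n"
    using edge_shape assms by blast
  then show ?thesis by (auto simp: doubleton_eq_iff)
qed

lemma path_edge: "1 \<le> i \<Longrightarrow> i < n \<Longrightarrow> {i, i + 1} \<in> E"
  using persistent unfolding persistent_def by blast

lemma X_property: "a < b \<Longrightarrow> b < c \<Longrightarrow> c < d \<Longrightarrow> {a, c} \<in> E \<Longrightarrow> {b, d} \<in> E \<Longrightarrow> {a, d} \<in> E"
  using persistent unfolding persistent_def by blast

lemma bar_property:
  "{a, b} \<in> E \<Longrightarrow> a + 1 < b \<Longrightarrow> \<exists>x. a < x \<and> x < b \<and> {a, x} \<in> E \<and> {x, b} \<in> E"
  using persistent unfolding persistent_def by blast

lemma finite_E: "finite E"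
proof -
  have "E \<subseteq> Pow {1..n}"
  proof
    fix e assume "e \<in> E"
    then obtain a b where "e = {a, b}" "a < b" "1 \<le> a" "b \<le> n" using edge_shape by blast
    then show "e \<in> Pow {1..n}" by auto
  qed
  then show ?thesis by (rule finite_subset) simp
qed

lemma hat_adj_bounds: "hat_adj n E x y \<Longrightarrow> x \<noteq> y \<and> x \<le> n + 1 \<and> y \<le> n + 1"
  unfolding hat_adj_iff using edge_bounds by fastforce

lemma edge_if_hat_adj: "hat_adj n E x y \<Longrightarrow> 1 \<le> x \<Longrightarrow> x \<le> n \<Longrightarrow> 1 \<le> y \<Longrightarrow> y \<le> n \<Longrightarrow> {x, y} \<in> E"
  unfolding hat_adj_iff by linarith

lemma hat_adj_Diff_edge:
  assumes "{b, d} \<in> E"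
  shows "hat_adj n (E - {{b, d}}) x y \<longleftrightarrow> hat_adj n E x y \<and> {x, y} \<noteq> {b, d}"
  using edge_bounds[OF assms] unfolding hat_adj_iff by (auto simp: doubleton_eq_iff)

lemma hat_adj_X:
  assumes "a < b" "b < c" "c < d" "hat_adj n E a c" "hat_adj n E b d"
  shows "hat_adj n E a d"
proof -
  have "d \<le> n + 1" using hat_adj_bounds[OF assms(5)] by simp
  consider "a = 0" | "d = n + 1" | "1 \<le> a" "d \<le> n" using \<open>d \<le> n + 1\<close> by linarith
  then show ?thesis
  proof cases
    case 3
    then have "{a, c} \<in> E" "{b, d} \<in> E" using edge_if_hat_adj assms by simp_all
    then show ?thesis using X_property assms(1-3) hat_adj_if_edge by blast
  qed (use assms \<open>d \<le> n + 1\<close> hat_adj_0 hat_adj_top in auto)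
qed

lemma hat_adj_bar:
  assumes "hat_adj n E a b" "a + 1 < b"
  shows "\<exists>x. a < x \<and> x < b \<and> hat_adj n E a x \<and> hat_adj n E x b"
proof -
  have "b \<le> n + 1" using hat_adj_bounds[OF assms(1)] by simp
  consider "a = 0" "b = n + 1" | "a = 0" "b \<le> n" | "1 \<le> a" "b = n + 1" | "1 \<le> a" "b \<le> n"
    using \<open>b \<le> n + 1\<close> by linarith
  then show ?thesis
  proof cases
    case 2
    then have "hat_adj n E (b - 1) b" using path_edge[of "b - 1"] assms(2) hat_adj_if_edge by simp
    then show ?thesis using 2 assms(2) hat_adj_0 by (intro exI[of _ "b - 1"]) auto
  next
    case 3
    then have "hat_adj n E a (a + 1)" using path_edge[of a] assms(2) hat_adj_if_edge by simp
    then show ?thesis using 3 assms(2) hat_adj_top by (intro exI[of _ "a + 1"]) auto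
  next
    case 4
    then have "{a, b} \<in> E" using edge_if_hat_adj[OF assms(1)] assms(2) by simp
    then obtain x where "a < x" "x < b" "{a, x} \<in> E" "{x, b} \<in> E"
      using bar_property assms(2) by blast
    then show ?thesis using hat_adj_if_edge by blast
  qed (use assms(2) hat_adj_0 hat_adj_top in \<open>auto intro!: exI[of _ 1]\<close>)
qed

text \<open>The split point of \<open>l\<close>--\<open>y\<close> given by the bar property cannot lie left of \<open>v\<close>,
  since by the X-property it would then be adjacent to \<open>w\<close>.\<close>
lemma hat_adj_shift_left:
  assumes vw: "hat_adj n E v w" and "l < v" "v < w"
    and gap: "\<forall>x. l < x \<and> x < v \<longrightarrow> \<not> hat_adj n E x w"
    and "v < y" "y \<le> w" "hat_adj n E l y"
  shows "hat_adj n E l v"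
  using assms(5-7)
proof (induction y rule: less_induct)
  case (less y)
  have "l + 1 < y" using less.prems \<open>l < v\<close> by linarith
  then obtain x where x: "l < x" "x < y" "hat_adj n E l x" "hat_adj n E x y"
    using hat_adj_bar[OF less.prems(3)] by blast
  consider "x < v" | "x = v" | "v < x" by linarith
  then show ?case
  proof cases
    case 1
    have "hat_adj n E x w"
    proof (cases "y = w")
      case False
      then show ?thesis using hat_adj_X[OF 1 less.prems(1) _ x(4) vw] less.prems(2) by simp
    qed (use x in simp)
    then show ?thesis using gap x(1) 1 by blast
  next
    case 2
    then show ?thesis using x by simp
  next
    case 3
    then show ?thesis using less.IH[of x] x less.prems by simp
  qed
qed

lemma hat_adj_shift_right:
  assumes vw: "hat_adj n E v w" and "v < w" "w < r"
    and gap: "\<forall>x. w < x \<and> x < r \<longrightarrow> \<not> hat_adj n E x v"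
    and "v \<le> y" "y < w" "hat_adj n E y r"
  shows "hat_adj n E w r"
  using assms(5-7)
proof (induction "w - y" arbitrary: y rule: less_induct)
  case (less y)
  have "y + 1 < r" using less.prems \<open>w < r\<close> by linarith
  then obtain x where x: "y < x" "x < r" "hat_adj n E y x" "hat_adj n E x r"
    using hat_adj_bar[OF less.prems(3)] by blast
  consider "x < w" | "x = w" | "w < x" by linarith
  then show ?case
  proof cases
    case 1
    then show ?thesis using less.hyps[of x] x less.prems by simp
  next
    case 2
    then show ?thesis using x by simp
  next
    case 3
    have "hat_adj n E v x"
    proof (cases "y = v")
      case False
      then show ?thesis using hat_adj_X[OF _ less.prems(2) 3 vw x(3)] less.prems(1) by simp
    qed (use x in simp)
    then show ?thesis using gap x(2) 3 hat_adj_sym by blast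
  qed
qed

lemma xiG_eq:
  assumes "a < b" "b < c" "c < d" "hat_adj n E a c" "hat_adj n E b d"
    and "\<forall>x. a < x \<and> x < b \<longrightarrow> \<not> hat_adj n E x c" "\<forall>x. c < x \<and> x < d \<longrightarrow> \<not> hat_adj n E x b"
  shows "xiG n E {b, c} = {a, b, c, d}"
proof -
  have minmax: "Min {b, c} = b" "Max {b, c} = c" using assms(2) by auto
  have "finite {i. c < i \<and> {i, b} \<in> hatE n E}"
    by (rule finite_subset[of _ "{..n+1}"]) (use hat_adj_bounds in \<open>auto simp: hat_adj_def\<close>)
  moreover have "d \<in> {i. c < i \<and> {i, b} \<in> hatE n E}"
    using assms(3,5) hat_adj_sym unfolding hat_adj_def by auto
  ultimately have "rG n E {b, c} = d"
    unfolding rG_def minmax using assms(7) by (intro Min_eqI) (auto simp: hat_adj_def not_less[symmetric])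
  moreover have "ellG n E {b, c} = a"
    unfolding ellG_def minmax using assms(1,4,6)
    by (intro Max_eqI) (auto simp: hat_adj_def not_less[symmetric])
  ultimately show ?thesis unfolding xiG_def minmax by simp
qed

lemma xi_cell_mem_XiG: "xi_cell n E a b c d \<Longrightarrow> {a, b, c, d} \<in> XiG n E"
  unfolding xi_cell_def XiG_def using xiG_eq by (metis image_eqI)

lemma xiG_xi_cell:
  assumes "e \<in> E"
  obtains a b c d where "xiG n E e = {a, b, c, d}" "xi_cell n E a b c d"
proof -
  obtain v w where e: "e = {v, w}" "v < w" "1 \<le> v" "w \<le> n"
    using edge_shape assms by blast
  have vw: "hat_adj n E v w" using e assms hat_adj_if_edge by simp
  define L where "L = {i. i < v \<and> hat_adj n E i w}"
  define R where "R = {i. w < i \<and> hat_adj n E v i}"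
  have L: "finite L" "0 \<in> L"
    unfolding L_def using e hat_adj_0[of w n E] by (auto intro: finite_subset[of _ "{..<v}"])
  have R: "finite R" "n + 1 \<in> R"
    unfolding R_def using e hat_adj_top[of v n E] hat_adj_bounds
    by (auto intro: finite_subset[of _ "{..n+1}"])
  define l where "l = Max L"
  define r where "r = Min R"
  have "l \<in> L" using Max_in L unfolding l_def by blast
  then have l: "l < v" "hat_adj n E l w" unfolding L_def by auto
  have l_gap: "\<forall>x. l < x \<and> x < v \<longrightarrow> \<not> hat_adj n E x w"
  proof (intro allI impI notI)
    fix x assume "l < x \<and> x < v" "hat_adj n E x w"
    then have "x \<in> L" unfolding L_def by simp
    then show False using Max_ge[OF L(1)] \<open>l < x \<and> x < v\<close> unfolding l_def by fastforce
  qed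
  have "r \<in> R" using Min_in R unfolding r_def by blast
  then have r: "w < r" "hat_adj n E v r" unfolding R_def by auto
  have r_gap: "\<forall>x. w < x \<and> x < r \<longrightarrow> \<not> hat_adj n E x v"
  proof (intro allI impI notI)
    fix x assume "w < x \<and> x < r" "hat_adj n E x v"
    then have "x \<in> R" unfolding R_def using hat_adj_sym by simp
    then show False using Min_le[OF R(1)] \<open>w < x \<and> x < r\<close> unfolding r_def by fastforce
  qed
  have "hat_adj n E l r" using hat_adj_X[OF l(1) e(2) r(1) l(2) r(2)] .
  moreover have "hat_adj n E l v" using hat_adj_shift_left[OF vw l(1) e(2) l_gap e(2) order_refl l(2)] .
  moreover have "hat_adj n E w r" using hat_adj_shift_right[OF vw e(2) r(1) r_gap order_refl e(2) r(2)] .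
  ultimately have "xi_cell n E l v w r"
    unfolding xi_cell_def using l r l_gap r_gap e assms vw by simp
  moreover have "xiG n E e = {l, v, w, r}"
    using xiG_eq[OF l(1) e(2) r(1) l(2) r(2) l_gap r_gap] e(1) by simp
  ultimately show ?thesis using that by blast
qed

lemma mem_XiG_iff: "\<sigma> \<in> XiG n E \<longleftrightarrow> (\<exists>a b c d. \<sigma> = {a, b, c, d} \<and> xi_cell n E a b c d)"
  using xiG_xi_cell xi_cell_mem_XiG unfolding XiG_def by (metis imageE)

lemma xi_cell_hat_adj:
  assumes "xi_cell n E a b c d" "x \<in> {a, b, c, d}" "y \<in> {a, b, c, d}" "x \<noteq> y"
  shows "hat_adj n E x y"
proof -
  have "hat_adj n E a b" "hat_adj n E a c" "hat_adj n E a d" "hat_adj n E b c" "hat_adj n E b d"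
    "hat_adj n E c d"
    using assms(1) hat_adj_if_edge unfolding xi_cell_def by auto
  then show ?thesis using assms(2-4) hat_adj_sym by auto
qed

lemma xi_cell_bounds: "xi_cell n E a b c d \<Longrightarrow> a < b \<and> b < c \<and> c < d \<and> d \<le> n + 1"
  unfolding xi_cell_def using hat_adj_bounds by blast

lemma XiG_cell:
  assumes "\<sigma> \<in> XiG n E"
  shows "\<sigma> \<subseteq> {0..n+1}" "card \<sigma> = 4"
  using assms xi_cell_bounds unfolding mem_XiG_iff by fastforce+

lemma xi_cell_no_edge_across:
  assumes cell: "xi_cell n E a b c d"
    and "a < p" "p \<le> b" "c \<le> q" "q < d" "(p, q) \<noteq> (b, c)"
  shows "\<not> hat_adj n E p q"
  using assms(2-6)
proof (induction "q - p" arbitrary: p q rule: less_induct)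
  case (less p q)
  have bc: "b < c" "hat_adj n E b c"
    and gap_l: "\<forall>x. a < x \<and> x < b \<longrightarrow> \<not> hat_adj n E x c"
    and gap_r: "\<forall>x. c < x \<and> x < d \<longrightarrow> \<not> hat_adj n E x b"
    using cell hat_adj_if_edge unfolding xi_cell_def by auto
  show ?case
  proof
    assume pq: "hat_adj n E p q"
    consider "p = b" | "q = c" | "p < b" "c < q" using less.prems by linarith
    then show False
    proof cases
      case 1
      then have "hat_adj n E q b" "c < q" using pq hat_adj_sym less.prems(3,5) by auto
      then show False using gap_r less.prems(4) by blast
    next
      case 2
      then show False using gap_l less.prems pq by auto
    next
      case 3
      then have "p + 1 < q" using bc(1) by linarith
      then obtain x where x: "p < x" "x < q" "hat_adj n E p x" "hat_adj n E x q"
        using hat_adj_bar[OF pq] by blast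
      consider "x \<le> b" | "b < x" "x < c" | "c \<le> x" by linarith
      then show False
      proof cases
        case 1
        have "q - x < q - p" using x(1,2) by linarith
        then show False using less.hyps[of q x] less.prems x 3 1 by auto
      next
        case 2
        have "hat_adj n E p c" using hat_adj_X[OF 3(1) 2 x(3) bc(2)] .
        then show False using gap_l less.prems 3 by blast
      next
        case 3
        have "x - p < q - p" using x(1,2) by linarith
        then show False using less.hyps[of x p] less.prems x \<open>p < b\<close> 3 by auto
      qed
    qed
  qed
qed

lemma xi_cell_not_interleaved:
  assumes cell: "xi_cell n E a b c d" and s: "s1 \<in> {a, b, c, d}" "s2 \<in> {a, b, c, d}" "s3 \<in> {a, b, c, d}"
    and order: "s1 < t1" "t1 < s2" "s2 < t2" "t2 < s3" and t: "hat_adj n E t1 t2"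
  shows False
proof -
  have abcd: "a < b" "b < c" "c < d" and bc: "hat_adj n E b c"
    and gap_l: "\<forall>x. a < x \<and> x < b \<longrightarrow> \<not> hat_adj n E x c"
    and gap_r: "\<forall>x. c < x \<and> x < d \<longrightarrow> \<not> hat_adj n E x b"
    using cell hat_adj_if_edge unfolding xi_cell_def by auto
  have "s1 < s2" "s2 < s3" using order by linarith+
  then have "s1 = a \<and> s2 = b \<and> s3 = c \<or> s1 = a \<and> s2 = b \<and> s3 = d \<or>
      s1 = a \<and> s2 = c \<and> s3 = d \<or> s1 = b \<and> s2 = c \<and> s3 = d"
    using s abcd by (simp only: insert_iff empty_iff simp_thms) (elim disjE; linarith?)
  then consider "s1 = a" "s2 = b" "s3 = c" | "s1 = a" "s2 = b" "s3 = d"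
    | "s1 = a" "s2 = c" "s3 = d" | "s1 = b" "s2 = c" "s3 = d"
    by blast
  then show False
  proof cases
    case 1
    then have "hat_adj n E t1 c" using hat_adj_X[OF _ _ _ t bc] order by simp
    then show False using gap_l order 1 by blast
  next
    case 2
    show False
    proof (cases "t2 < c")
      case True
      then have "hat_adj n E t1 c" using hat_adj_X[OF _ _ _ t bc] order 2 by simp
      then show False using gap_l order 2 by blast
    qed (use xi_cell_no_edge_across[OF cell, of t1 t2] order 2 t in simp)
  next
    case 3
    show False
    proof (cases "t1 \<le> b")
      case False
      then have "hat_adj n E b t2" using hat_adj_X[OF _ _ _ bc t] order 3 by simp
      then show False using gap_r order 3 hat_adj_sym by blast
    qed (use xi_cell_no_edge_across[OF cell, of t1 t2] order 3 t in simp)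
  next
    case 4
    then have "hat_adj n E b t2" using hat_adj_X[OF _ _ _ bc t] order by simp
    then show False using gap_r order 4 hat_adj_sym by blast
  qed
qed

lemma XiG_not_interleaves:
  assumes "\<sigma> \<in> XiG n E" "\<tau> \<in> XiG n E"
  shows "\<not> interleaves \<sigma> \<tau>"
proof
  assume "interleaves \<sigma> \<tau>"
  then obtain x1 x2 x3 x4 x5 where order: "x1 < x2" "x2 < x3" "x3 < x4" "x4 < x5"
    and in_\<sigma>: "x1 \<in> \<sigma>" "x3 \<in> \<sigma>" "x5 \<in> \<sigma>" and in_\<tau>: "x2 \<in> \<tau>" "x4 \<in> \<tau>"
    unfolding interleaves_def by blast
  obtain a b c d where \<sigma>: "\<sigma> = {a, b, c, d}" "xi_cell n E a b c d"
    using assms(1) unfolding mem_XiG_iff by blast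
  obtain a' b' c' d' where \<tau>: "\<tau> = {a', b', c', d'}" "xi_cell n E a' b' c' d'"
    using assms(2) unfolding mem_XiG_iff by blast
  have "hat_adj n E x2 x4" using xi_cell_hat_adj[OF \<tau>(2)] in_\<tau> order \<tau>(1) by simp
  then show False using xi_cell_not_interleaved[OF \<sigma>(2)] in_\<sigma> order \<sigma>(1) by blast
qed

lemma fan_subset_XiG:
  assumes "\<forall>a b. {a, b} \<in> E \<longrightarrow> \<not> a + 1 < b" "1 \<le> i" "i < n"
  shows "{0, i, i + 1, n + 1} \<in> XiG n E"
proof -
  have "{x, y} \<notin> E" if "x + 1 < y \<or> y + 1 < x" for x y
    using assms(1) that by (metis insert_commute)
  then have "xi_cell n E 0 i (i + 1) (n + 1)"
    unfolding xi_cell_def using assms(2,3) path_edge[OF assms(2,3)] hat_adj_0 hat_adj_top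
    by (auto simp: hat_adj_iff insert_commute)
  then show ?thesis by (rule xi_cell_mem_XiG)
qed

lemma crossing_path_left:
  "x < p \<Longrightarrow> p < c \<Longrightarrow> c < y \<Longrightarrow> {x, c} \<in> E \<Longrightarrow> {p, y} \<in> E \<Longrightarrow>
    \<exists>z. x < z \<and> z \<le> p \<and> {x, z} \<in> E \<and> {z, y} \<in> E"
proof (induction c rule: less_induct)
  case (less c)
  have "x + 1 < c" using less.prems by linarith
  then obtain w where w: "x < w" "w < c" "{x, w} \<in> E" "{w, c} \<in> E"
    using bar_property[OF less.prems(4)] by blast
  consider "w < p" | "w = p" | "p < w" by linarith
  then show ?case
  proof cases
    case 1
    then have "{w, y} \<in> E" using X_property[OF 1 less.prems(2,3) w(4) less.prems(5)] by simp
    then show ?thesis using w 1 by auto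
  next
    case 2
    then show ?thesis using w less.prems by auto
  next
    case 3
    then show ?thesis using less.IH[of w] w less.prems by auto
  qed
qed

lemma crossing_path_right:
  "x < p \<Longrightarrow> p < c \<Longrightarrow> c < y \<Longrightarrow> {x, c} \<in> E \<Longrightarrow> {p, y} \<in> E \<Longrightarrow>
    \<exists>z. c \<le> z \<and> z < y \<and> {x, z} \<in> E \<and> {z, y} \<in> E"
proof (induction "c - p" arbitrary: p rule: less_induct)
  case (less p)
  have "p + 1 < y" using less.prems by linarith
  then obtain w where w: "p < w" "w < y" "{p, w} \<in> E" "{w, y} \<in> E"
    using bar_property[OF less.prems(5)] by blast
  consider "w < c" | "w = c" | "c < w" by linarith
  then show ?case
  proof cases
    case 1
    then show ?thesis using less.hyps[of w] w less.prems by auto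
  next
    case 2
    then show ?thesis using w less.prems by auto
  next
    case 3
    then have "{x, w} \<in> E" using X_property[OF less.prems(1,2) 3 less.prems(4) w(3)] by simp
    then show ?thesis using w 3 by (intro exI[of _ w]) simp
  qed
qed

text \<open>If a bar split of \<open>x\<close>--\<open>y\<close> uses \<open>b\<close>--\<open>d\<close>, then \<open>x\<close>--\<open>y\<close> is longer and hence
  X-forced; the crossing edges then provide two splits, of which at most one uses \<open>b\<close>--\<open>d\<close>.\<close>
lemma persistent_Diff_edge:
  assumes bd: "{b, d} \<in> E" "b + 1 < d" "\<not> X_forced E b d"
    and longest: "\<And>x y. {x, y} \<in> E \<Longrightarrow> x + 1 < y \<Longrightarrow> \<not> X_forced E x y \<Longrightarrow> y - x \<le> d - b"
  shows "persistent n (E - {{b, d}})"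
  unfolding persistent_def
proof (intro conjI allI impI)
  show "\<forall>e\<in>E - {{b, d}}. \<exists>x y. e = {x, y} \<and> x < y \<and> 1 \<le> x \<and> y \<le> n"
    using edge_shape by blast
next
  fix i assume "1 \<le> i \<and> i < n"
  then show "{i, i + 1} \<in> E - {{b, d}}"
    using path_edge bd(2) by (auto simp: doubleton_eq_iff)
next
  fix x p c y assume h: "x < p \<and> p < c \<and> c < y \<and> {x, c} \<in> E - {{b, d}} \<and> {p, y} \<in> E - {{b, d}}"
  then have "X_forced E x y" unfolding X_forced_def by blast
  then have "{x, y} \<noteq> {b, d}" using bd(2,3) h by (auto simp: doubleton_eq_iff)
  then show "{x, y} \<in> E - {{b, d}}" using X_property h by blast
next
  fix x y assume h: "{x, y} \<in> E - {{b, d}} \<and> x + 1 < y"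
  then obtain z where z: "x < z" "z < y" "{x, z} \<in> E" "{z, y} \<in> E"
    using bar_property by blast
  show "\<exists>z. x < z \<and> z < y \<and> {x, z} \<in> E - {{b, d}} \<and> {z, y} \<in> E - {{b, d}}"
  proof (cases "{x, z} = {b, d} \<or> {z, y} = {b, d}")
    case False
    then show ?thesis using z by blast
  next
    case True
    then have "d - b < y - x" using z bd(2) by (auto simp: doubleton_eq_iff)
    then have "X_forced E x y" using longest[of x y] h by fastforce
    then obtain p c where pc: "x < p" "p < c" "c < y" "{x, c} \<in> E" "{p, y} \<in> E"
      unfolding X_forced_def by blast
    obtain z1 where z1: "x < z1" "z1 \<le> p" "{x, z1} \<in> E" "{z1, y} \<in> E"
      using crossing_path_left[OF pc] by blast
    obtain z2 where z2: "c \<le> z2" "z2 < y" "{x, z2} \<in> E" "{z2, y} \<in> E"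
      using crossing_path_right[OF pc] by blast
    have "z1 < z2" using z1 z2 pc by linarith
    show ?thesis
    proof (cases "{x, z1} = {b, d} \<or> {z1, y} = {b, d}")
      case False
      then show ?thesis using z1 pc by (intro exI[of _ z1]) auto
    next
      case True
      then have "{x, z2} \<noteq> {b, d} \<and> {z2, y} \<noteq> {b, d}"
        using \<open>z1 < z2\<close> z1 z2 by (auto simp: doubleton_eq_iff)
      then show ?thesis using z2 pc by (intro exI[of _ z2]) auto
    qed
  qed
qed

text \<open>The shortest long edge is not X-forced; a longest non-forced long edge can be removed.\<close>
lemma exists_removable_edge:
  assumes "{a, c} \<in> E" "a + 1 < c"
  obtains b d where "{b, d} \<in> E" "b < d" "persistent n (E - {{b, d}})"
proof -
  define long where "long k \<longleftrightarrow> (\<exists>x y. {x, y} \<in> E \<and> x + 1 < y \<and> y - x = k)" for k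
  obtain x y where xy: "{x, y} \<in> E" "x + 1 < y" and shortest: "y - x = (LEAST k. long k)"
    using LeastI[of long "c - a"] assms unfolding long_def by blast
  have "\<not> X_forced E x y"
  proof
    assume "X_forced E x y"
    then obtain p c where "x < p" "p < c" "c < y" "{x, c} \<in> E" unfolding X_forced_def by blast
    then have "long (c - x)" unfolding long_def by (intro exI[of _ x] exI[of _ c]) auto
    then show False
      using Least_le[of long "c - x"] shortest \<open>c < y\<close> \<open>x < p\<close> \<open>p < c\<close> by linarith
  qed
  define free where "free k \<longleftrightarrow> (\<exists>x y. {x, y} \<in> E \<and> x + 1 < y \<and> \<not> X_forced E x y \<and> y - x = k)" for k
  have "free (y - x)" unfolding free_def using xy \<open>\<not> X_forced E x y\<close> by blast
  moreover have "\<forall>k. free k \<longrightarrow> k \<le> n" unfolding free_def using edge_bounds by fastforce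
  ultimately obtain k where "free k" and k_max: "\<forall>k'. free k' \<longrightarrow> k' \<le> k"
    using Nat.ex_has_greatest_nat[of free "y - x" n] by blast
  then obtain b d where bd: "{b, d} \<in> E" "b + 1 < d" "\<not> X_forced E b d" "d - b = k"
    unfolding free_def by blast
  have "persistent n (E - {{b, d}})"
    using k_max bd unfolding free_def by (intro persistent_Diff_edge[OF bd(1-3)]) blast
  then show ?thesis using that bd by simp
qed

end

section \<open>Edge deletion as a bistellar flip\<close>

locale edge_flip = persistent_graph +
  fixes b d :: nat
  assumes edge_bd: "{b, d} \<in> E" and b_less_d: "b < d"
    and persistent_Diff: "persistent n (E - {{b, d}})"
begin

abbreviation E' :: "nat set set" where "E' \<equiv> E - {{b, d}}"

sublocale minus: persistent_graph n E'
  by (rule persistent_graph.intro[OF persistent_Diff])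

lemma hat_adj_DiffI: "hat_adj n E x y \<Longrightarrow> \<not> (x = b \<and> y = d \<or> x = d \<and> y = b) \<Longrightarrow> hat_adj n E' x y"
  using hat_adj_Diff_edge[OF edge_bd] by (auto simp: doubleton_eq_iff)

lemma hat_adj_of_Diff: "hat_adj n E' x y \<Longrightarrow> hat_adj n E x y"
  using hat_adj_Diff_edge[OF edge_bd] by blast

lemma not_hat_adj_Diff_bd: "\<not> hat_adj n E' b d"
  using hat_adj_Diff_edge[OF edge_bd] by blast

lemma hat_adj_bd: "hat_adj n E b d"
  using hat_adj_if_edge[OF edge_bd] .

text \<open>In both flip situations the bar split of \<open>b\<close>--\<open>d\<close> is forced: any other split point
  either violates a gap of the cell of \<open>E'\<close> or, by the X-property, restores \<open>b\<close>--\<open>d\<close> in \<open>E'\<close>.\<close>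
lemma flip_left_edge:
  assumes cell: "xi_cell n E' p q d u" and "p < b" "b < q"
  shows "{b, q} \<in> E"
proof -
  have "q < d" "hat_adj n E' q d" and gap: "\<forall>x. p < x \<and> x < q \<longrightarrow> \<not> hat_adj n E' x d"
    using cell hat_adj_if_edge unfolding xi_cell_def by auto
  then have "b + 1 < d" using \<open>b < q\<close> by linarith
  then obtain z where z: "b < z" "z < d" "{b, z} \<in> E" "{z, d} \<in> E"
    using bar_property[OF edge_bd] by blast
  then have bz: "hat_adj n E' b z" and zd: "hat_adj n E' z d"
    using hat_adj_DiffI hat_adj_if_edge by auto
  consider "z < q" | "z = q" | "q < z" by linarith
  then show ?thesis
  proof cases
    case 1
    then show ?thesis using gap zd \<open>p < b\<close> z(1) by auto
  next
    case 3
    then show ?thesis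
      using minus.hat_adj_X[OF \<open>b < q\<close> 3 z(2) bz \<open>hat_adj n E' q d\<close>] not_hat_adj_Diff_bd by simp
  qed (use z in simp)
qed

lemma flip_right_edge:
  assumes cell: "xi_cell n E' p b s u" and "s < d" "d < u"
  shows "{s, d} \<in> E"
proof -
  have "b < s" "hat_adj n E' b s" and gap: "\<forall>x. s < x \<and> x < u \<longrightarrow> \<not> hat_adj n E' x b"
    using cell hat_adj_if_edge unfolding xi_cell_def by auto
  then have "b + 1 < d" using \<open>s < d\<close> by linarith
  then obtain z where z: "b < z" "z < d" "{b, z} \<in> E" "{z, d} \<in> E"
    using bar_property[OF edge_bd] by blast
  then have bz: "hat_adj n E' b z" and zd: "hat_adj n E' z d"
    using hat_adj_DiffI hat_adj_if_edge by auto
  consider "z < s" | "z = s" | "s < z" by linarith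
  then show ?thesis
  proof cases
    case 1
    then show ?thesis
      using minus.hat_adj_X[OF z(1) 1 \<open>s < d\<close> \<open>hat_adj n E' b s\<close> zd] not_hat_adj_Diff_bd by simp
  next
    case 3
    then show ?thesis using gap bz z(2) \<open>d < u\<close> hat_adj_sym by auto
  qed (use z in simp)
qed

lemma xi_cell_flip_left:
  assumes cell: "xi_cell n E' p q d u" and "p < b" "b < q"
  shows "xi_cell n E p b q d" "xi_cell n E b q d u" "xi_cell n E p b d u"
proof -
  have order: "p < q" "q < d" "d < u" and qd: "{q, d} \<in> E"
    and adj': "hat_adj n E' p d" "hat_adj n E' q d"
    and gap_l': "\<forall>x. p < x \<and> x < q \<longrightarrow> \<not> hat_adj n E' x d"
    and gap_r': "\<forall>x. d < x \<and> x < u \<longrightarrow> \<not> hat_adj n E' x q"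
    using cell hat_adj_if_edge unfolding xi_cell_def by auto
  have adj: "hat_adj n E p q" "hat_adj n E p d" "hat_adj n E p u" "hat_adj n E q u" "hat_adj n E d u"
    using cell hat_adj_of_Diff unfolding xi_cell_def by auto
  have bq: "{b, q} \<in> E" using flip_left_edge[OF assms] .
  have bu: "hat_adj n E b u" using hat_adj_X[OF \<open>b < q\<close> order(2,3) hat_adj_bd adj(4)] .
  have gap_d: "\<forall>x. p < x \<and> x < b \<longrightarrow> \<not> hat_adj n E x d"
  proof (intro allI impI notI)
    fix x assume x: "p < x \<and> x < b" "hat_adj n E x d"
    then have "hat_adj n E' x d" using hat_adj_DiffI b_less_d by auto
    then show False using gap_l' x \<open>b < q\<close> by auto
  qed
  have pb: "hat_adj n E p b"
    using hat_adj_shift_left[OF hat_adj_bd \<open>p < b\<close> b_less_d gap_d b_less_d order_refl adj(2)] .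
  show "xi_cell n E p b q d"
    unfolding xi_cell_def
  proof (intro conjI allI impI notI)
    fix x assume x: "p < x \<and> x < b" "hat_adj n E x q"
    then have "hat_adj n E x d" using hat_adj_X[OF _ \<open>b < q\<close> order(2) x(2) hat_adj_bd] by simp
    then show False using gap_d x by blast
  next
    fix x assume x: "q < x \<and> x < d" "hat_adj n E x b"
    then have "hat_adj n E' b x" using hat_adj_DiffI hat_adj_sym by auto
    then show False
      using minus.hat_adj_X[OF \<open>b < q\<close> _ _ _ adj'(2)] x not_hat_adj_Diff_bd by auto
  qed (use \<open>p < b\<close> \<open>b < q\<close> order bq qd pb adj hat_adj_bd hat_adj_if_edge in auto)
  show "xi_cell n E b q d u"
    unfolding xi_cell_def
  proof (intro conjI allI impI notI)
    fix x assume x: "b < x \<and> x < q" "hat_adj n E x d"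
    then have "hat_adj n E' x d" using hat_adj_DiffI b_less_d by auto
    then show False using gap_l' x \<open>p < b\<close> by auto
  next
    fix x assume x: "d < x \<and> x < u" "hat_adj n E x q"
    then have "hat_adj n E' x q" using hat_adj_DiffI \<open>b < q\<close> order by auto
    then show False using gap_r' x by auto
  qed (use \<open>b < q\<close> order qd bq hat_adj_if_edge hat_adj_bd bu adj in auto)
  show "xi_cell n E p b d u"
    unfolding xi_cell_def
  proof (intro conjI allI impI notI)
    fix x assume "p < x \<and> x < b" "hat_adj n E x d"
    then show False using gap_d by blast
  next
    fix x assume x: "d < x \<and> x < u" "hat_adj n E x b"
    then have "hat_adj n E' b x" using hat_adj_DiffI hat_adj_sym by auto
    then show False using minus.xi_cell_no_edge_across[OF cell, of b x] \<open>p < b\<close> \<open>b < q\<close> x by simp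
  qed (use \<open>p < b\<close> b_less_d order edge_bd pb bu adj in auto)
qed

lemma xi_cell_flip_right:
  assumes cell: "xi_cell n E' p b s u" and "s < d" "d < u"
  shows "xi_cell n E p b s d" "xi_cell n E b s d u" "xi_cell n E p b d u"
proof -
  have order: "p < b" "b < s" "s < u" and bs: "{b, s} \<in> E"
    and adj': "hat_adj n E' b s"
    and gap_l': "\<forall>x. p < x \<and> x < b \<longrightarrow> \<not> hat_adj n E' x s"
    and gap_r': "\<forall>x. s < x \<and> x < u \<longrightarrow> \<not> hat_adj n E' x b"
    using cell hat_adj_if_edge unfolding xi_cell_def by auto
  have adj: "hat_adj n E p b" "hat_adj n E p s" "hat_adj n E p u" "hat_adj n E b u" "hat_adj n E s u"
    using cell hat_adj_of_Diff unfolding xi_cell_def by auto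
  have sd: "{s, d} \<in> E" using flip_right_edge[OF assms] .
  have pd: "hat_adj n E p d" using hat_adj_X[OF order(1,2) \<open>s < d\<close> adj(2) hat_adj_bd] .
  have gap_b: "\<forall>x. d < x \<and> x < u \<longrightarrow> \<not> hat_adj n E x b"
  proof (intro allI impI notI)
    fix x assume x: "d < x \<and> x < u" "hat_adj n E x b"
    then have "hat_adj n E' x b" using hat_adj_DiffI b_less_d by auto
    then show False using gap_r' x \<open>s < d\<close> by auto
  qed
  have du: "hat_adj n E d u"
    using hat_adj_shift_right[OF hat_adj_bd b_less_d \<open>d < u\<close> gap_b order_refl b_less_d adj(4)] .
  show "xi_cell n E p b s d"
    unfolding xi_cell_def
  proof (intro conjI allI impI notI)
    fix x assume x: "p < x \<and> x < b" "hat_adj n E x s"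
    then have "hat_adj n E' x s" using hat_adj_DiffI order \<open>s < d\<close> by auto
    then show False using gap_l' x by auto
  next
    fix x assume x: "s < x \<and> x < d" "hat_adj n E x b"
    then have "hat_adj n E' x b" using hat_adj_DiffI by auto
    then show False using gap_r' x \<open>d < u\<close> by auto
  qed (use order \<open>s < d\<close> bs adj pd hat_adj_bd sd hat_adj_if_edge in auto)
  show "xi_cell n E b s d u"
    unfolding xi_cell_def
  proof (intro conjI allI impI notI)
    fix x assume x: "b < x \<and> x < s" "hat_adj n E x d"
    then have "hat_adj n E' x d" using hat_adj_DiffI b_less_d by auto
    then show False
      using minus.hat_adj_X[OF _ _ \<open>s < d\<close> adj'] x not_hat_adj_Diff_bd by auto
  next
    fix x assume x: "d < x \<and> x < u" "hat_adj n E x s"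
    then have "hat_adj n E s x" using hat_adj_sym by blast
    then have "hat_adj n E b x" using hat_adj_X[OF order(2) \<open>s < d\<close> _ hat_adj_bd] x(1) by blast
    then show False using gap_b x hat_adj_sym by blast
  qed (use order \<open>s < d\<close> \<open>d < u\<close> sd bs adj hat_adj_bd hat_adj_if_edge du in auto)
  show "xi_cell n E p b d u"
    unfolding xi_cell_def
  proof (intro conjI allI impI notI)
    fix x assume x: "p < x \<and> x < b" "hat_adj n E x d"
    then have "hat_adj n E' x d" using hat_adj_DiffI b_less_d by auto
    then show False using minus.xi_cell_no_edge_across[OF cell, of x d] x \<open>s < d\<close> \<open>d < u\<close> by simp
  next
    fix x assume "d < x \<and> x < u" "hat_adj n E x b"
    then show False using gap_b by blast
  qed (use order b_less_d \<open>d < u\<close> edge_bd adj pd du in auto)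
qed

text \<open>Deleting \<open>b\<close>--\<open>d\<close> is a bistellar flip on the five points \<open>x1 < ... < x5\<close>.\<close>
lemma xi_cell_Diff_cases:
  assumes cell: "xi_cell n E' p q s u"
  shows "xi_cell n E p q s u \<or>
    (\<exists>x1 x2 x3 x4 x5. x1 < x2 \<and> x2 < x3 \<and> x3 < x4 \<and> x4 < x5 \<and>
       {p, q, s, u} \<subseteq> {x1, x2, x3, x4, x5} \<and>
       xi_cell n E x2 x3 x4 x5 \<and> xi_cell n E x1 x2 x4 x5 \<and> xi_cell n E x1 x2 x3 x4)"
proof (cases "xi_cell n E p q s u")
  case False
  have order: "p < q" "q < s" "s < u" and qs: "{q, s} \<in> E"
    and gap_l': "\<forall>x. p < x \<and> x < q \<longrightarrow> \<not> hat_adj n E' x s"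
    and gap_r': "\<forall>x. s < x \<and> x < u \<longrightarrow> \<not> hat_adj n E' x q"
    using cell unfolding xi_cell_def by auto
  have "hat_adj n E p q" "hat_adj n E p s" "hat_adj n E p u" "hat_adj n E q u" "hat_adj n E s u"
    using cell hat_adj_of_Diff unfolding xi_cell_def by auto
  then have "\<not> ((\<forall>x. p < x \<and> x < q \<longrightarrow> \<not> hat_adj n E x s) \<and> (\<forall>x. s < x \<and> x < u \<longrightarrow> \<not> hat_adj n E x q))"
    using False order qs unfolding xi_cell_def by simp
  then obtain x where "p < x \<and> x < q \<and> hat_adj n E x s \<or> s < x \<and> x < u \<and> hat_adj n E x q"
    by blast
  then have "p < b \<and> b < q \<and> s = d \<or> q = b \<and> s < d \<and> d < u"
  proof (elim disjE conjE)
    assume x: "p < x" "x < q" "hat_adj n E x s"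
    then have "\<not> hat_adj n E' x s" using gap_l' by blast
    then have "x = b" "s = d" using hat_adj_DiffI[OF x(3)] x order b_less_d by auto
    then show ?thesis using x by simp
  next
    assume x: "s < x" "x < u" "hat_adj n E x q"
    then have "\<not> hat_adj n E' x q" using gap_r' by blast
    then have "x = d" "q = b" using hat_adj_DiffI[OF x(3)] x order b_less_d by auto
    then show ?thesis using x order by simp
  qed
  then show ?thesis
  proof (elim disjE conjE)
    assume "p < b" "b < q" "s = d"
    then have "xi_cell n E' p q d u" using cell by simp
    from xi_cell_flip_left[OF this \<open>p < b\<close> \<open>b < q\<close>] show ?thesis
      using order \<open>p < b\<close> \<open>b < q\<close> \<open>s = d\<close> by blast
  next
    assume "q = b" "s < d" "d < u"
    then have "xi_cell n E' p b s u" using cell by simp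
    from xi_cell_flip_right[OF this \<open>s < d\<close> \<open>d < u\<close>] show ?thesis
      using order \<open>q = b\<close> \<open>s < d\<close> \<open>d < u\<close> by blast
  qed
qed simp

lemma XiG_Diff_covered:
  assumes "strict_mono_on {0..n+1} t"
  shows "(\<Union>\<sigma>\<in>XiG n E'. cyc_hull t \<sigma>) \<subseteq> (\<Union>\<sigma>\<in>XiG n E. cyc_hull t \<sigma>)"
proof
  fix x assume "x \<in> (\<Union>\<sigma>\<in>XiG n E'. cyc_hull t \<sigma>)"
  then obtain \<sigma> where "\<sigma> \<in> XiG n E'" and x: "x \<in> cyc_hull t \<sigma>" by blast
  then obtain p q s u where \<sigma>: "\<sigma> = {p, q, s, u}" and cell: "xi_cell n E' p q s u"
    unfolding minus.mem_XiG_iff by blast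
  from xi_cell_Diff_cases[OF cell] show "x \<in> (\<Union>\<sigma>\<in>XiG n E. cyc_hull t \<sigma>)"
  proof (elim disjE exE conjE)
    assume "xi_cell n E p q s u"
    then show ?thesis using x \<sigma> xi_cell_mem_XiG by blast
  next
    fix x1 x2 x3 x4 x5
    assume order: "x1 < x2" "x2 < x3" "x3 < x4" "x4 < x5"
      and sub: "{p, q, s, u} \<subseteq> {x1, x2, x3, x4, x5}"
      and cells: "xi_cell n E x2 x3 x4 x5" "xi_cell n E x1 x2 x4 x5" "xi_cell n E x1 x2 x3 x4"
    let ?F = "{x1, x2, x3, x4, x5}"
    have "x5 \<le> n + 1" using xi_cell_bounds[OF cells(1)] by blast
    then have "?F \<subseteq> {0..n+1}" using order by auto
    then have mono: "strict_mono_on ?F t" by (rule monotone_on_subset[OF assms])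
    have "x \<in> cyc_hull t ?F" using x \<sigma> cyc_hull_mono[OF sub] by blast
    moreover have "cyc_hull t ?F \<subseteq> cyc_hull t (?F - {x1}) \<union> cyc_hull t (?F - {x3}) \<union> cyc_hull t (?F - {x5})"
      using order by (intro cyc_hull_circuit_split(1)[OF _ mono]) simp_all
    ultimately have "x \<in> cyc_hull t (?F - {x1}) \<union> cyc_hull t (?F - {x3}) \<union> cyc_hull t (?F - {x5})"
      by blast
    moreover have "?F - {x1} = {x2, x3, x4, x5}" "?F - {x3} = {x1, x2, x4, x5}" "?F - {x5} = {x1, x2, x3, x4}"
      using order by auto
    ultimately show ?thesis
      using xi_cell_mem_XiG[OF cells(1)] xi_cell_mem_XiG[OF cells(2)] xi_cell_mem_XiG[OF cells(3)] by auto
  qed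
qed

end

lemma XiG_covers:
  assumes "2 \<le> n" "strict_mono_on {0..n+1} t" "persistent n E"
  shows "cyc_hull t {0..<n+2} \<subseteq> (\<Union>\<sigma>\<in>XiG n E. cyc_hull t \<sigma>)"
  using assms(3)
proof (induction "card E" arbitrary: E rule: less_induct)
  case less
  interpret persistent_graph n E by (rule persistent_graph.intro) (fact less.prems)
  show ?case
  proof (cases "\<exists>a c. {a, c} \<in> E \<and> a + 1 < c")
    case True
    then obtain b d where "{b, d} \<in> E" "b < d" "persistent n (E - {{b, d}})"
      using exists_removable_edge by blast
    then interpret edge_flip n E b d by unfold_locales
    have "card E' < card E" using card_Diff1_less[OF finite_E edge_bd] .
    then have "cyc_hull t {0..<n+2} \<subseteq> (\<Union>\<sigma>\<in>XiG n E'. cyc_hull t \<sigma>)"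
      using less.hyps persistent_Diff by blast
    then show ?thesis using XiG_Diff_covered[OF assms(2)] by (rule subset_trans)
  next
    case False
    have "(\<Union>i\<in>{1..n-1}. cyc_hull t {0, i, i+1, n+1}) \<subseteq> (\<Union>\<sigma>\<in>XiG n E. cyc_hull t \<sigma>)"
    proof (rule UN_least)
      fix i assume "i \<in> {1..n-1}"
      then have "{0, i, i+1, n+1} \<in> XiG n E" using fan_subset_XiG False assms(1) by auto
      then show "cyc_hull t {0, i, i+1, n+1} \<subseteq> (\<Union>\<sigma>\<in>XiG n E. cyc_hull t \<sigma>)" by blast
    qed
    with cyc_hull_fan[OF assms(1,2)] show ?thesis by (rule subset_trans)
  qed
qed

theorem lemma12:
  fixes n :: nat and E :: "nat set set" and t :: "nat \<Rightarrow> real"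
  assumes "n \<ge> 2"
    and "persistent n E"
    and "strict_mono_on {0..n+1} t"
  shows "cyc_triangulation t (n + 2) (XiG n E)"
proof -
  interpret persistent_graph n E by (rule persistent_graph.intro) (fact assms(2))
  have vertices: "{0..<n+2} = {0..n+1}" by auto
  have mono: "strict_mono_on S t" if "S \<subseteq> {0..n+1}" for S
    using monotone_on_subset[OF assms(3) that] .
  have cell: "\<sigma> \<subseteq> {0..n+1}" "card \<sigma> = 4" "finite \<sigma>" if "\<sigma> \<in> XiG n E" for \<sigma>
    using XiG_cell[OF that] by (auto simp: card_ge_0_finite)
  have face: "(cyc_hull t \<sigma> \<inter> cyc_hull t \<tau>) face_of cyc_hull t \<sigma>"
    if "\<sigma> \<in> XiG n E" "\<tau> \<in> XiG n E" for \<sigma> \<tau>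
  proof -
    have "finite (\<sigma> \<union> \<tau>)" "\<sigma> \<union> \<tau> \<subseteq> {0..n+1}" using cell that by auto
    then have "cyc_hull t \<sigma> \<inter> cyc_hull t \<tau> = cyc_hull t (\<sigma> \<inter> \<tau>)"
      using cyc_hull_Int mono XiG_not_interleaves that by blast
    then show ?thesis using cyc_hull_Int_face_of[OF cell(3) mono[OF cell(1)]] cell(2) that(1) by simp
  qed
  have "(\<Union>\<sigma>\<in>XiG n E. cyc_hull t \<sigma>) = cyc_hull t {0..<n+2}"
    using XiG_covers[OF assms(1,3,2)] cell(1) cyc_hull_mono unfolding vertices by blast
  then show ?thesis
    unfolding cyc_triangulation_def vertices using cell(1,2) face by (metis Int_commute)
qed

end
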